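(* Consider the sparse sequence model and the data-dependent measure $\Delta^n$ described in the context, with $\lambda_n = O(n^{-(a+1)})$ as $n\to\infty$ for a constant $a>0$, and with $\alpha < 2T$. Then for any sequence $M_n > 1$ with $M_n\to\infty$, \[ \sup_{\theta^\star} \mathsf{E}_{\theta^\star} \Delta^n\bigl(\{\theta\in\mathbb{R}^n : |S_\theta| > M_n |S_{\theta^\star}|\}\bigr) \to 0, \quad n\to\infty. \]
   Context: Model: one observes $Y^n=(Y_1,\ldots,Y_n)^\top$ with $Y_i = \theta_i + Z_i$, $i=1,\ldots,n$, where $\theta\in\mathbb{R}^n$ is unknown and $Z_1,\ldots,Z_n$ are iid copies of a random variable $Z$ with fully known distribution, mean zero, and subgaussian in the sense that $\mathsf{E}\exp(tZ) \le \exp(\sigma^2 t^2/2)$ for all $t\in\mathbb{R}$, for a known constant $\sigma>0$. $T>0$ denotes the upper endpoint of the interval on which the moment generating function of $(Z/\sigma)^2$ exists, i.e. $\mathsf{E} e^{t (Z/\sigma)^2}$ is finite (bounded by a constant) for $t\in(0,T]$. $\mathsf{E}_{\theta^\star}$ denotes expectation when the true mean vector is $\theta^\star$. For $\theta\in\mathbb{R}^n$, $S_\theta=\{i:\theta_i\neq 0\}$ and $|S_\theta|$ is its cardinality. Data-dependent measure: fix constants $\alpha\in(0,1)$, $\gamma>0$ and a sequence $\lambda_n\in(0,1)$. Define $\Delta^n = \bigotimes_{i=1}^n \{\phi_i\, \mathsf{N}(\mu_i,\tau_i^2) + (1-\phi_i)\,\delta_0\}$, where $\mu_i = Y_i$,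 $\tau_i^2 = \sigma^2(\alpha+\gamma)^{-1}$, and $\operatorname{logit}(\phi_i) = \operatorname{logit}(\lambda_n) + \tfrac12\log\tfrac{\gamma}{\alpha+\gamma} + \tfrac{\alpha}{2\sigma^2} Y_i^2$, with $\operatorname{logit}(p)=\log\{p/(1-p)\}$. *)

theory Defs
  imports "HOL-Probability.Probability" "HOL-Library.Landau_Symbols"
begin

definition logit :: "real \<Rightarrow> real" where
  "logit p = ln (p / (1 - p))"

definition expit :: "real \<Rightarrow> real" where
  "expit x = 1 / (1 + exp (- x))"

definition mixture :: "real \<Rightarrow> real measure \<Rightarrow> real measure \<Rightarrow> real measure" where
  "mixture p M N = measure_of UNIV (sets borel)
     (\<lambda>A. ennreal p * emeasure M A + ennreal (1 - p) * emeasure N A)"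

definition gaussian :: "real \<Rightarrow> real \<Rightarrow> real measure" where
  "gaussian mu tau2 = density lborel (\<lambda>x. ennreal (normal_density mu (sqrt tau2) x))"

definition slab_weight :: "real \<Rightarrow> real \<Rightarrow> real \<Rightarrow> real \<Rightarrow> real \<Rightarrow> real" where
  "slab_weight lam alpha gam sg y =
     expit (logit lam + 1/2 * ln (gam / (alpha + gam)) + alpha / (2 * sg\<^sup>2) * y\<^sup>2)"

definition Delta :: "nat \<Rightarrow> real \<Rightarrow> real \<Rightarrow> real \<Rightarrow> real \<Rightarrow> (nat \<Rightarrow> real) \<Rightarrow> (nat \<Rightarrow> real) measure" where
  "Delta n lam alpha gam sg Y = PiM {..<n} (\<lambda>i.
     mixture (slab_weight lam alpha gam sg (Y i))
             (gaussian (Y i) (sg\<^sup>2 / (alpha + gam)))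
             (return borel 0))"

definition supp :: "nat \<Rightarrow> (nat \<Rightarrow> real) \<Rightarrow> nat set" where
  "supp n theta = {i \<in> {..<n}. theta i \<noteq> 0}"

end

theory Submission
  imports Defs "HOL-Real_Asymp.Real_Asymp"
begin

(* Let J be the set of coordinates where theta_star vanishes; there Y_i = Z_i. If
   |S_theta| > M |S_theta_star|, then theta has at least min(1, M - 1) nonzero coordinates
   in J, so Markov's inequality for the number of such coordinates bounds the Delta^n-mass
   of the event by the sum of the slab weights phi_i over J, divided by min(1, M - 1).
   Each phi_i is at most lambda/(1 - lambda) exp(alpha Z_i^2/(2 sigma^2)), which has finite
   expectation because alpha/2 < T. So the expected mass is O(n lambda_n) uniformly in
   theta_star, and n lambda_n -> 0. *)

context
  fixes p :: real and M N :: "real measure"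
  assumes p: "0 \<le> p" "p \<le> 1"
    and M: "prob_space M" "sets M = sets borel"
    and N: "prob_space N" "sets N = sets borel"
begin

lemma sets_mixture: "sets (mixture p M N) = sets borel"
  unfolding mixture_def by (metis sets.sigma_sets_eq space_borel sets_measure_of sets.space_closed)

lemma emeasure_mixture:
  assumes "A \<in> sets borel"
  shows "emeasure (mixture p M N) A = ennreal p * emeasure M A + ennreal (1 - p) * emeasure N A"
proof -
  have "sigma_algebra UNIV (sets borel)"
    using sets.sigma_algebra_axioms[of borel] by simp
  moreover have "positive (sets borel) (\<lambda>A. ennreal p * emeasure M A + ennreal (1 - p) * emeasure N A)"
    by (simp add: positive_def)
  moreover have "countably_additive (sets borel)
      (\<lambda>A. ennreal p * emeasure M A + ennreal (1 - p) * emeasure N A)"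
  proof (rule countably_additiveI)
    fix A :: "nat \<Rightarrow> real set"
    assume A: "range A \<subseteq> sets borel" "disjoint_family A"
    have "(\<Sum>i. ennreal p * emeasure M (A i) + ennreal (1 - p) * emeasure N (A i))
        = ennreal p * (\<Sum>i. emeasure M (A i)) + ennreal (1 - p) * (\<Sum>i. emeasure N (A i))"
      by (simp add: suminf_add[symmetric] ennreal_suminf_cmult)
    also have "\<dots> = ennreal p * emeasure M (\<Union> (range A)) + ennreal (1 - p) * emeasure N (\<Union> (range A))"
      using A M N by (simp add: suminf_emeasure)
    finally show "(\<Sum>i. ennreal p * emeasure M (A i) + ennreal (1 - p) * emeasure N (A i))
        = ennreal p * emeasure M (\<Union> (range A)) + ennreal (1 - p) * emeasure N (\<Union> (range A))" .
  qed
  ultimately show ?thesis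
    unfolding mixture_def using assms by (subst emeasure_measure_of_sigma) auto
qed

lemma prob_space_mixture: "prob_space (mixture p M N)"
proof
  have "space (mixture p M N) = UNIV" "space M = UNIV" "space N = UNIV"
    using sets_eq_imp_space_eq[OF sets_mixture] sets_eq_imp_space_eq[OF M(2)]
      sets_eq_imp_space_eq[OF N(2)] by simp_all
  then have "emeasure (mixture p M N) (space (mixture p M N)) = ennreal p + ennreal (1 - p)"
    using emeasure_mixture[of UNIV] prob_space.emeasure_space_1[OF M(1)]
      prob_space.emeasure_space_1[OF N(1)] by simp
  also have "\<dots> = 1"
    using p by (simp add: ennreal_plus[symmetric] del: ennreal_plus)
  finally show "emeasure (mixture p M N) (space (mixture p M N)) = 1" .
qed

end

lemma expit_gt_0: "0 < expit x"
  unfolding expit_def by (simp add: add_pos_pos)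

lemma expit_less_1: "expit x < 1"
  unfolding expit_def by (simp add: add_pos_pos)

lemma expit_le_exp: "expit x \<le> exp x"
proof -
  have "1 \<le> exp x * (1 + exp (- x))"
    by (simp add: distrib_left exp_minus_inverse)
  then show ?thesis
    unfolding expit_def by (simp add: divide_simps add_pos_pos)
qed

lemma slab_weight_le_odds:
  assumes "0 < lam" "lam < 1" "0 \<le> alpha" "0 < gam"
  shows "slab_weight lam alpha gam sg y \<le> lam / (1 - lam) * exp (alpha / (2 * sg\<^sup>2) * y\<^sup>2)"
proof -
  have odds: "exp (logit lam) = lam / (1 - lam)"
    unfolding logit_def using assms by simp
  have shrink: "exp (1/2 * ln (gam / (alpha + gam))) \<le> 1"
    using assms by (simp add: ln_div)
  have "slab_weight lam alpha gam sg y
      \<le> exp (logit lam + 1/2 * ln (gam / (alpha + gam)) + alpha / (2 * sg\<^sup>2) * y\<^sup>2)"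
    unfolding slab_weight_def by (rule expit_le_exp)
  also have "\<dots> = lam / (1 - lam) * exp (1/2 * ln (gam / (alpha + gam))) * exp (alpha / (2 * sg\<^sup>2) * y\<^sup>2)"
    by (simp add: exp_add odds)
  also have "\<dots> \<le> lam / (1 - lam) * 1 * exp (alpha / (2 * sg\<^sup>2) * y\<^sup>2)"
    using assms shrink by (intro mult_right_mono mult_left_mono) simp_all
  finally show ?thesis
    by simp
qed

lemma nn_integral_PiM_component:
  assumes "\<And>i. i \<in> I \<Longrightarrow> prob_space (M i)" "i \<in> I" "f \<in> borel_measurable (M i)"
  shows "(\<integral>\<^sup>+ \<omega>. f (\<omega> i) \<partial>PiM I M) = (\<integral>\<^sup>+ x. f x \<partial>M i)"
proof -
  have "(\<integral>\<^sup>+ x. f x \<partial>M i) = (\<integral>\<^sup>+ x. f x \<partial>distr (PiM I M) (M i) (\<lambda>\<omega>. \<omega> i))"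
    using assms by (simp add: distr_PiM_component)
  also have "\<dots> = (\<integral>\<^sup>+ \<omega>. f (\<omega> i) \<partial>PiM I M)"
    using assms by (subst nn_integral_distr) (auto intro: measurable_component_singleton)
  finally show ?thesis ..
qed

lemma emeasure_PiM_component:
  assumes "\<And>i. i \<in> I \<Longrightarrow> prob_space (M i)" "i \<in> I" "A \<in> sets (M i)"
  shows "emeasure (PiM I M) {\<omega> \<in> space (PiM I M). \<omega> i \<in> A} = emeasure (M i) A"
proof -
  have "{\<omega> \<in> space (PiM I M). \<omega> i \<in> A} = (\<lambda>\<omega>. \<omega> i) -` A \<inter> space (PiM I M)"
    by auto
  then have "emeasure (PiM I M) {\<omega> \<in> space (PiM I M). \<omega> i \<in> A}
      = emeasure (distr (PiM I M) (M i) (\<lambda>\<omega>. \<omega> i)) A"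
    using assms by (simp add: emeasure_distr measurable_component_singleton)
  also have "\<dots> = emeasure (M i) A"
    using assms by (simp add: distr_PiM_component)
  finally show ?thesis .
qed

context
  fixes n :: nat and lam alpha gam sg :: real and Y :: "nat \<Rightarrow> real"
  assumes sg: "sg > 0" and alpha_gam: "alpha + gam > 0"
begin

private abbreviation "slab i \<equiv>
  mixture (slab_weight lam alpha gam sg (Y i)) (gaussian (Y i) (sg\<^sup>2 / (alpha + gam))) (return borel 0)"

private lemma prob_space_gaussian: "prob_space (gaussian mu (sg\<^sup>2 / (alpha + gam)))"
  unfolding gaussian_def using sg alpha_gam by (intro prob_space_normal_density) simp

private lemma slab_facts:
  "prob_space (slab i)" "sets (slab i) = sets borel"
  "A \<in> sets borel \<Longrightarrow> emeasure (slab i) A = ennreal (slab_weight lam alpha gam sg (Y i))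
     * emeasure (gaussian (Y i) (sg\<^sup>2 / (alpha + gam))) A
     + ennreal (1 - slab_weight lam alpha gam sg (Y i)) * emeasure (return borel 0) A"
proof -
  have weight: "0 \<le> slab_weight lam alpha gam sg (Y i)" "slab_weight lam alpha gam sg (Y i) \<le> 1"
    unfolding slab_weight_def using expit_gt_0 expit_less_1 less_imp_le by blast+
  have "sets (gaussian (Y i) (sg\<^sup>2 / (alpha + gam))) = sets borel"
    by (simp add: gaussian_def)
  note components = weight prob_space_gaussian this prob_space_return[of 0 borel, simplified] sets_return
  show "prob_space (slab i)" "sets (slab i) = sets borel"
    "A \<in> sets borel \<Longrightarrow> emeasure (slab i) A = ennreal (slab_weight lam alpha gam sg (Y i))
     * emeasure (gaussian (Y i) (sg\<^sup>2 / (alpha + gam))) A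
     + ennreal (1 - slab_weight lam alpha gam sg (Y i)) * emeasure (return borel 0) A"
    by (fact prob_space_mixture[OF components] sets_mixture[OF components]
        emeasure_mixture[OF components])+
qed

lemma sets_Delta: "sets (Delta n lam alpha gam sg Y) = sets (PiM {..<n} (\<lambda>_. borel :: real measure))"
  unfolding Delta_def by (intro sets_PiM_cong) (simp_all add: slab_facts)

lemma space_Delta: "space (Delta n lam alpha gam sg Y) = space (PiM {..<n} (\<lambda>_. borel :: real measure))"
  using sets_eq_imp_space_eq[OF sets_Delta] .

lemma emeasure_Delta_coordinate_nonzero_le:
  assumes "i < n"
  shows "emeasure (Delta n lam alpha gam sg Y) {\<theta> \<in> space (Delta n lam alpha gam sg Y). \<theta> i \<noteq> 0}
    \<le> ennreal (slab_weight lam alpha gam sg (Y i))"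
proof -
  have nonzero: "{x::real. x \<noteq> 0} \<in> sets borel"
    by measurable
  have "emeasure (Delta n lam alpha gam sg Y) {\<theta> \<in> space (Delta n lam alpha gam sg Y). \<theta> i \<noteq> 0}
      = emeasure (slab i) {x. x \<noteq> 0}"
    unfolding Delta_def using assms nonzero slab_facts
    by (subst emeasure_PiM_component[symmetric]) simp_all
  also have "\<dots> = ennreal (slab_weight lam alpha gam sg (Y i))
      * emeasure (gaussian (Y i) (sg\<^sup>2 / (alpha + gam))) {x. x \<noteq> 0}"
    using nonzero by (simp add: slab_facts)
  also have "\<dots> \<le> ennreal (slab_weight lam alpha gam sg (Y i))"
    using prob_space.emeasure_le_1[OF prob_space_gaussian] mult_left_mono by fastforce
  finally show ?thesis .
qed

end

lemma emeasure_le_sum_of_count_ge: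
  assumes "finite J" "\<And>i. i \<in> J \<Longrightarrow> C i \<in> sets N" "0 \<le> m"
    and "\<And>x. x \<in> A \<Longrightarrow> m \<le> real (card {i \<in> J. x \<in> C i})"
  shows "ennreal m * emeasure N A \<le> (\<Sum>i\<in>J. emeasure N (C i))"
proof (cases "A \<in> sets N")
  case True
  have "ennreal m * indicator A x \<le> (\<Sum>i\<in>J. indicator (C i) x)" for x
  proof -
    have "(\<Sum>i\<in>J. indicator (C i) x :: ennreal) = of_nat (card {i \<in> J. x \<in> C i})"
      using assms(1) by (simp add: indicator_def sum.If_cases Int_def conj_commute)
    then show ?thesis
      using assms(3,4) by (simp add: indicator_def ennreal_of_nat_eq_real_of_nat)
  qed
  then have "(\<integral>\<^sup>+ x. ennreal m * indicator A x \<partial>N) \<le> (\<integral>\<^sup>+ x. (\<Sum>i\<in>J. indicator (C i) x) \<partial>N)"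
    by (intro nn_integral_mono)
  then show ?thesis
    using True assms(2) by (simp add: nn_integral_cmult_indicator nn_integral_sum)
qed (simp add: emeasure_notin_sets)

lemma min_excess_le_card_supp_diff:
  fixes \<theta> \<theta>' :: "nat \<Rightarrow> real"
  assumes "1 < c" "c * real (card (supp n \<theta>')) < real (card (supp n \<theta>))"
  shows "min 1 (c - 1) \<le> real (card (supp n \<theta> - supp n \<theta>'))"
proof -
  let ?s = "real (card (supp n \<theta>'))" and ?k = "real (card (supp n \<theta> - supp n \<theta>'))"
  have "card (supp n \<theta>) \<le> card (supp n \<theta>' \<union> (supp n \<theta> - supp n \<theta>'))"
    by (intro card_mono) (auto simp: supp_def)
  also have "\<dots> \<le> card (supp n \<theta>') + card (supp n \<theta> - supp n \<theta>')"
    by (rule card_Un_le)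
  finally have excess: "(c - 1) * ?s < ?k"
    using assms(2) by (simp add: algebra_simps)
  show ?thesis
  proof (cases "card (supp n \<theta>') = 0")
    case True
    then have "1 \<le> card (supp n \<theta> - supp n \<theta>')"
      using excess by simp
    then show ?thesis
      by simp
  next
    case False
    then have "c - 1 \<le> (c - 1) * ?s"
      using assms(1) by (simp add: mult_le_cancel_left1)
    then show ?thesis
      using excess by linarith
  qed
qed

lemma emeasure_Delta_excess_support_le:
  fixes \<theta>' z :: "nat \<Rightarrow> real"
  assumes "sg > 0" "alpha + gam > 0" "1 < c"
  shows "ennreal (min 1 (c - 1)) * emeasure (Delta n lam alpha gam sg (\<lambda>i. \<theta>' i + z i))
      {\<theta> \<in> space (PiM {..<n} (\<lambda>_. borel :: real measure)).
         c * real (card (supp n \<theta>')) < real (card (supp n \<theta>))}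
    \<le> (\<Sum>i\<in>{..<n} - supp n \<theta>'. ennreal (slab_weight lam alpha gam sg (z i)))"
proof -
  let ?J = "{..<n} - supp n \<theta>'"
    and ?E = "{\<theta> \<in> space (PiM {..<n} (\<lambda>_. borel :: real measure)).
      c * real (card (supp n \<theta>')) < real (card (supp n \<theta>))}"
  define \<Delta> where "\<Delta> = Delta n lam alpha gam sg (\<lambda>i. \<theta>' i + z i)"
  define C where "C i = {\<theta> \<in> space \<Delta>. \<theta> i \<noteq> 0}" for i
  have C_sets: "C i \<in> sets \<Delta>" if "i \<in> ?J" for i
  proof -
    have "i \<in> {..<n}"
      using that by simp
    then have "(\<lambda>\<theta>. \<theta> i) \<in> borel_measurable \<Delta>"
      unfolding \<Delta>_def by (simp add: measurable_cong_sets[OF sets_Delta[OF assms(1,2)] refl])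
    then show ?thesis
      unfolding C_def by measurable
  qed
  have count_eq: "{i \<in> ?J. \<theta> \<in> C i} = supp n \<theta> - supp n \<theta>'"
    if "\<theta> \<in> space \<Delta>" for \<theta>
    using that unfolding C_def supp_def by blast
  have "ennreal (min 1 (c - 1)) * emeasure \<Delta> ?E \<le> (\<Sum>i\<in>?J. emeasure \<Delta> (C i))"
  proof (intro emeasure_le_sum_of_count_ge C_sets)
    fix \<theta> assume "\<theta> \<in> ?E"
    then have "\<theta> \<in> space \<Delta>" "c * real (card (supp n \<theta>')) < real (card (supp n \<theta>))"
      unfolding \<Delta>_def space_Delta[OF assms(1,2)] by simp_all
    then show "min 1 (c - 1) \<le> real (card {i \<in> ?J. \<theta> \<in> C i})"
      unfolding count_eq[OF \<open>\<theta> \<in> space \<Delta>\<close>] using assms(3) by (intro min_excess_le_card_supp_diff)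
  qed (use assms(3) in auto)
  also have "\<dots> \<le> (\<Sum>i\<in>?J. ennreal (slab_weight lam alpha gam sg (z i)))"
  proof (intro sum_mono)
    fix i assume "i \<in> ?J"
    then have "i < n" "\<theta>' i = 0"
      by (auto simp: supp_def)
    then show "emeasure \<Delta> (C i) \<le> ennreal (slab_weight lam alpha gam sg (z i))"
      using emeasure_Delta_coordinate_nonzero_le[OF assms(1,2) \<open>i < n\<close>,
          where Y = "\<lambda>i. \<theta>' i + z i" and lam = lam]
      unfolding C_def \<Delta>_def by simp
  qed
  finally show ?thesis
    unfolding \<Delta>_def .
qed

lemma nn_integral_Delta_excess_support_le:
  fixes D :: "real measure" and \<theta>' :: "nat \<Rightarrow> real"
  assumes D: "prob_space D" "sets D = sets borel"
    and sg: "sg > 0" and weights: "0 \<le> alpha" "0 < gam" "0 < lam" "lam < 1" and c: "1 < c"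
    and integrable: "integrable D (\<lambda>y. exp (alpha / (2 * sg\<^sup>2) * y\<^sup>2))"
  shows "(\<integral>\<^sup>+ z. emeasure (Delta n lam alpha gam sg (\<lambda>i. \<theta>' i + z i))
      {\<theta> \<in> space (PiM {..<n} (\<lambda>_. borel :: real measure)).
         c * real (card (supp n \<theta>')) < real (card (supp n \<theta>))} \<partial>PiM {..<n} (\<lambda>_. D))
    \<le> ennreal (real n * (lam / (1 - lam)) * (\<integral>y. exp (alpha / (2 * sg\<^sup>2) * y\<^sup>2) \<partial>D)
        / min 1 (c - 1))"
proof -
  let ?J = "{..<n} - supp n \<theta>'" and ?P = "PiM {..<n} (\<lambda>_. D)"
    and ?E = "{\<theta> \<in> space (PiM {..<n} (\<lambda>_. borel :: real measure)).
      c * real (card (supp n \<theta>')) < real (card (supp n \<theta>))}"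
  define m where "m = min 1 (c - 1)"
  define w where "w y = slab_weight lam alpha gam sg y" for y
  define C where "C = lam / (1 - lam) * (\<integral>y. exp (alpha / (2 * sg\<^sup>2) * y\<^sup>2) \<partial>D)"
  have m_pos: "0 < m" and C_nonneg: "0 \<le> C"
    using c weights unfolding m_def C_def by auto
  have w_measurable: "w \<in> borel_measurable D"
    unfolding w_def slab_weight_def expit_def measurable_cong_sets[OF D(2) refl] by measurable
  have mean_weight: "(\<integral>\<^sup>+ y. w y \<partial>D) \<le> ennreal C"
  proof -
    have "(\<integral>\<^sup>+ y. w y \<partial>D) \<le> (\<integral>\<^sup>+ y. lam / (1 - lam) * exp (alpha / (2 * sg\<^sup>2) * y\<^sup>2) \<partial>D)"
      unfolding w_def using weights by (intro nn_integral_mono ennreal_leI slab_weight_le_odds)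
    also have "\<dots> = ennreal C"
      unfolding C_def using integrable weights by (subst nn_integral_eq_integral) auto
    finally show ?thesis .
  qed
  have pointwise: "emeasure (Delta n lam alpha gam sg (\<lambda>i. \<theta>' i + z i)) ?E
    \<le> ennreal (1 / m) * (\<Sum>i\<in>?J. ennreal (w (z i)))" for z
  proof -
    have "ennreal m * ennreal (1 / m) = 1"
      using m_pos by (simp add: ennreal_mult[symmetric])
    then have "ennreal m * emeasure (Delta n lam alpha gam sg (\<lambda>i. \<theta>' i + z i)) ?E
      \<le> ennreal m * (ennreal (1 / m) * (\<Sum>i\<in>?J. ennreal (w (z i))))"
      unfolding w_def m_def mult.assoc[symmetric] using sg weights c
      by (simp add: emeasure_Delta_excess_support_le)
    then show ?thesis
      using m_pos by (simp add: ennreal_mult_le_mult_iff)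
  qed
  have "(\<integral>\<^sup>+ z. emeasure (Delta n lam alpha gam sg (\<lambda>i. \<theta>' i + z i)) ?E \<partial>?P)
    \<le> (\<integral>\<^sup>+ z. ennreal (1 / m) * (\<Sum>i\<in>?J. ennreal (w (z i))) \<partial>?P)"
    by (intro nn_integral_mono pointwise)
  also have "\<dots> = ennreal (1 / m) * (\<Sum>i\<in>?J. \<integral>\<^sup>+ z. w (z i) \<partial>?P)"
  proof -
    have "(\<lambda>z. ennreal (w (z i))) \<in> borel_measurable ?P" if "i \<in> ?J" for i
      using that by (intro measurable_compose[OF _ measurable_ennreal] measurable_compose[OF _ w_measurable]) simp
    then show ?thesis
      by (simp only: nn_integral_cmult[OF borel_measurable_sum] nn_integral_sum)
  qed
  also have "\<dots> = ennreal (1 / m) * (\<Sum>i\<in>?J. \<integral>\<^sup>+ y. w y \<partial>D)"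
    using D w_measurable
    by (intro arg_cong[where f = "(*) (ennreal (1 / m))"] sum.cong refl nn_integral_PiM_component) auto
  also have "\<dots> \<le> ennreal (1 / m) * (of_nat n * ennreal C)"
  proof -
    have "(\<Sum>i\<in>?J. \<integral>\<^sup>+ y. w y \<partial>D) \<le> of_nat (card ?J) * ennreal C"
      using sum_mono[of ?J, OF mean_weight] by simp
    also have "\<dots> \<le> of_nat n * ennreal C"
      using card_mono[of "{..<n}" ?J] by (intro mult_right_mono) auto
    finally show ?thesis
      by (rule mult_left_mono) simp
  qed
  also have "\<dots> = ennreal (real n * C / m)"
    using m_pos C_nonneg by (simp add: ennreal_of_nat_eq_real_of_nat ennreal_mult[symmetric])
  finally show ?thesis
    unfolding C_def m_def by (simp add: mult.assoc)
qed

lemma tendsto_zero_if_bigo_powr: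
  fixes f :: "nat \<Rightarrow> real"
  assumes "0 < b" "f \<in> O(\<lambda>n. real n powr - b)"
  shows "f \<longlonglongrightarrow> 0"
proof -
  have "(\<lambda>n. real n powr - b) \<in> o(\<lambda>_. 1)"
    using assms(1) by real_asymp
  from smalloD_tendsto[OF landau_o.big_small_trans[OF assms(2) this]] show ?thesis
    by simp
qed

theorem theorem3:
  fixes D :: "real measure" and sg T alpha gam a :: real
    and lam M :: "nat \<Rightarrow> real"
  assumes D_prob: "prob_space D" and D_sets: "sets D = sets borel"
    and mean0: "integrable D (\<lambda>z. z)" "(\<integral>z. z \<partial>D) = 0"
    and sigma_pos: "sg > 0"
    and subgauss: "\<And>t. integrable D (\<lambda>z. exp (t * z)) \<and>
                        (\<integral>z. exp (t * z) \<partial>D) \<le> exp (sg\<^sup>2 * t\<^sup>2 / 2)"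
    and T_pos: "T > 0"
    and mgf_sq: "\<And>t. t \<in> {0<..T} \<Longrightarrow> integrable D (\<lambda>z. exp (t * (z / sg)\<^sup>2))"
    and alpha: "0 < alpha" "alpha < 1" and alpha_T: "alpha < 2 * T"
    and gam: "gam > 0"
    and a_pos: "a > 0"
    and lam_range: "\<And>n. 0 < lam n \<and> lam n < 1"
    and lam_rate: "lam \<in> O(\<lambda>n. real n powr (- (a + 1)))"
    and M_gt: "\<And>n. M n > 1"
    and M_lim: "filterlim M at_top sequentially"
  shows "(\<lambda>n. SUP theta_star :: nat \<Rightarrow> real.
            \<integral>\<^sup>+ z. emeasure (Delta n (lam n) alpha gam sg (\<lambda>i. theta_star i + z i))
                 {theta \<in> space (PiM {..<n} (\<lambda>_. borel :: real measure)).
                    real (card (supp n theta)) > M n * real (card (supp n theta_star))}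
              \<partial>(PiM {..<n} (\<lambda>_. D)))
         \<longlonglongrightarrow> 0"
proof -
  define C where "C = (\<integral>y. exp (alpha / (2 * sg\<^sup>2) * y\<^sup>2) \<partial>D)"
  define B where "B n = real n * lam n / (1 - lam n) * C / min 1 (M n - 1)" for n
  have exponent_eq:
    "(\<lambda>y. exp (alpha / (2 * sg\<^sup>2) * y\<^sup>2)) = (\<lambda>y. exp (alpha / 2 * (y / sg)\<^sup>2))"
    using sigma_pos by (simp add: power_divide field_simps)
  have integrable: "integrable D (\<lambda>y. exp (alpha / (2 * sg\<^sup>2) * y\<^sup>2))"
    unfolding exponent_eq using alpha alpha_T by (intro mgf_sq) auto
  have bound: "(\<integral>\<^sup>+ z. emeasure (Delta n (lam n) alpha gam sg (\<lambda>i. \<theta>' i + z i))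
      {\<theta> \<in> space (PiM {..<n} (\<lambda>_. borel :: real measure)).
         real (card (supp n \<theta>)) > M n * real (card (supp n \<theta>'))} \<partial>PiM {..<n} (\<lambda>_. D))
    \<le> ennreal (B n)" for n \<theta>'
    using nn_integral_Delta_excess_support_le[OF D_prob D_sets sigma_pos _ gam _ _ M_gt integrable]
      alpha lam_range[of n] unfolding B_def C_def by simp
  have "(\<lambda>n. real n * lam n) \<longlonglongrightarrow> 0"
  proof (rule tendsto_zero_if_bigo_powr)
    have "(\<lambda>n. real n * real n powr - (a + 1)) \<in> O(\<lambda>n. real n powr - a)"
      by real_asymp
    then show "(\<lambda>n. real n * lam n) \<in> O(\<lambda>n. real n powr - a)"
      using landau_o.big.mult_left[OF lam_rate] landau_o.big_trans by blast
  qed (fact a_pos)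
  moreover have "lam \<longlonglongrightarrow> 0"
    using a_pos lam_rate by (intro tendsto_zero_if_bigo_powr[of "a + 1"]) auto
  moreover have "(\<lambda>n. min 1 (M n - 1)) \<longlonglongrightarrow> 1"
    using filterlim_at_top[THEN iffD1, OF M_lim, rule_format, of 2]
    by (intro tendsto_eventually) (auto elim: eventually_mono)
  ultimately have "B \<longlonglongrightarrow> 0 / (1 - 0) * C / 1"
    unfolding B_def by (intro tendsto_intros) auto
  then have B_lim: "(\<lambda>n. ennreal (B n)) \<longlonglongrightarrow> 0"
    using tendsto_ennrealI[of B 0] by simp
  show ?thesis
    by (rule tendsto_sandwich[OF _ _ tendsto_const B_lim])
      (auto intro!: always_eventually SUP_least bound)
qed

end
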